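(* Let $H$ be a real Hilbert space, $A:H\to c_0$ bounded linear with adjoint $A^*:\ell^1\to H$ (identifying $c_0^*=\ell^1$), let $H_n\subset H$ be a subspace of dimension $n$ with $\mathcal N(A)\cap H_n=\{0\}$. For $i=1,2$ let $f^i\in H$ and let $u^{n,i}$ be a solution of $$\min_{u\in\ell^1}\|u\|_1\quad\text{subject to}\quad \langle z,A^*u\rangle=\langle z,f^i\rangle\ \ \forall z\in H_n,$$ and let $v^{n,i}\in H_n$ be such that $Av^{n,i}\in\partial\|\cdot\|_1(u^{n,i})$ (such elements exist). Then $$D^{\mathrm{sym}}(u^{n,1},u^{n,2}):=\langle Av^{n,1}-Av^{n,2},\,u^{n,1}-u^{n,2}\rangle\le 2\kappa_n\|f^1-f^2\|$$ and $$\big|\|u^{n,1}\|_1-\|u^{n,2}\|_1\big|\le 2\kappa_n\|f^1-f^2\|.$$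
   Context: $A^*$ is defined by $\langle A^*u,z\rangle=\sum_iu_i(Az)_i$. $\partial\|\cdot\|_1(u)=\{\xi\in\ell^\infty:\|\xi\|_\infty\le1,\ \sum_i\xi_iu_i=\|u\|_1\}$. $\kappa_n=\sup_{z\in H_n\setminus\{0\}}\|z\|/\|Az\|_\infty$. The symmetric Bregman distance is $D^{\mathrm{sym}}(v,u)=\langle\xi_v-\xi_u,v-u\rangle$ for subgradients $\xi_v\in\partial\|\cdot\|_1(v)$, $\xi_u\in\partial\|\cdot\|_1(u)$. *)

theory Defs
  imports "HOL-Analysis.Analysis"
begin

text \<open>Elements of l^1, c_0, l^infinity are modelled as real sequences nat => real.\<close>

definition in_l1 :: "(nat \<Rightarrow> real) \<Rightarrow> bool" where
  "in_l1 u \<longleftrightarrow> summable (\<lambda>i. \<bar>u i\<bar>)"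

definition l1norm :: "(nat \<Rightarrow> real) \<Rightarrow> real" where
  "l1norm u = (\<Sum>i. \<bar>u i\<bar>)"

definition pairing :: "(nat \<Rightarrow> real) \<Rightarrow> (nat \<Rightarrow> real) \<Rightarrow> real" where
  "pairing xi u = (\<Sum>i. xi i * u i)"

definition supnorm :: "(nat \<Rightarrow> real) \<Rightarrow> real" where
  "supnorm x = (SUP i. \<bar>x i\<bar>)"

definition subdiff_l1 :: "(nat \<Rightarrow> real) \<Rightarrow> (nat \<Rightarrow> real) set" where
  "subdiff_l1 u = {xi. (\<forall>i. \<bar>xi i\<bar> \<le> 1) \<and> pairing xi u = l1norm u}"

definition bounded_linear_c0 :: "('h::real_normed_vector \<Rightarrow> nat \<Rightarrow> real) \<Rightarrow> bool" where
  "bounded_linear_c0 A \<longleftrightarrow>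
     (\<forall>x y i. A (x + y) i = A x i + A y i) \<and>
     (\<forall>c x i. A (c *\<^sub>R x) i = c * A x i) \<and>
     (\<exists>K. \<forall>x i. \<bar>A x i\<bar> \<le> K * norm x) \<and>
     (\<forall>x. (\<lambda>i. A x i) \<longlonglongrightarrow> 0)"

text \<open>Feasible set: <z, A^* u> = <z, f> for all z in Hn, where by definition of the adjoint
  <A^* u, z> = sum_i u_i (A z)_i.\<close>
definition feasible :: "('h::real_inner \<Rightarrow> nat \<Rightarrow> real) \<Rightarrow> 'h set \<Rightarrow> 'h \<Rightarrow> (nat \<Rightarrow> real) \<Rightarrow> bool" where
  "feasible A Hn f u \<longleftrightarrow> in_l1 u \<and> (\<forall>z\<in>Hn. (\<Sum>i. u i * A z i) = inner z f)"

definition is_l1_min_solution ::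
  "('h::real_inner \<Rightarrow> nat \<Rightarrow> real) \<Rightarrow> 'h set \<Rightarrow> 'h \<Rightarrow> (nat \<Rightarrow> real) \<Rightarrow> bool" where
  "is_l1_min_solution A Hn f u \<longleftrightarrow>
     feasible A Hn f u \<and> (\<forall>w. feasible A Hn f w \<longrightarrow> l1norm u \<le> l1norm w)"

text \<open>kappa_n = sup over Hn - {0} of ||z|| / ||Az||_inf. The value 0 is added to the set
  (harmless, all quotients are nonnegative) so that the sup is well defined also if Hn = {0}.\<close>
definition kappa :: "('h::real_normed_vector \<Rightarrow> nat \<Rightarrow> real) \<Rightarrow> 'h set \<Rightarrow> real" where
  "kappa A Hn = Sup (insert 0 ((\<lambda>z. norm z / supnorm (A z)) ` (Hn - {0})))"

definition Dsym :: "(nat \<Rightarrow> real) \<Rightarrow> (nat \<Rightarrow> real) \<Rightarrow> (nat \<Rightarrow> real) \<Rightarrow> (nat \<Rightarrow> real) \<Rightarrow> real" where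
  "Dsym xi1 xi2 u1 u2 = pairing (\<lambda>i. xi1 i - xi2 i) (\<lambda>i. u1 i - u2 i)"

end

theory Submission
  imports Defs
begin

text \<open>
  Testing the constraint of problem \<open>i\<close> with \<open>v\<^sup>j \<in> H\<^sub>n\<close> gives \<open>pairing (A v\<^sup>j) u\<^sup>i = \<langle>v\<^sup>j, f\<^sup>i\<rangle>\<close>;
  moreover \<open>pairing (A v\<^sup>i) u\<^sup>i = \<parallel>u\<^sup>i\<parallel>\<^sub>1\<close>, and \<open>pairing (A v\<^sup>j) u\<^sup>i \<le> \<parallel>u\<^sup>i\<parallel>\<^sub>1\<close> because \<open>\<bar>A v\<^sup>j\<bar> \<le> 1\<close>.
  Hence \<open>D\<^sup>s\<^sup>y\<^sup>m = \<langle>v\<^sup>1 - v\<^sup>2, f\<^sup>1 - f\<^sup>2\<rangle>\<close> and \<open>\<parallel>u\<^sup>1\<parallel>\<^sub>1 - \<parallel>u\<^sup>2\<parallel>\<^sub>1 \<le> \<langle>v\<^sup>1, f\<^sup>1 - f\<^sup>2\<rangle>\<close>, and Cauchy-Schwarz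
  with \<open>\<parallel>v\<^sup>i\<parallel> \<le> \<kappa>\<^sub>n \<parallel>A v\<^sup>i\<parallel>\<^sub>\<infinity> \<le> \<kappa>\<^sub>n\<close> concludes.

  The real work is that the set whose supremum is \<open>\<kappa>\<^sub>n\<close> is bounded (the supremum of an unbounded
  set of reals is unspecified). This is equivalence of norms on \<open>H\<^sub>n\<close>: \<open>z \<mapsto> \<parallel>A z\<parallel>\<^sub>\<infinity>\<close> is continuous
  and nonzero on the unit sphere of \<open>H\<^sub>n\<close>, which is compact, being a closed subset of the image of the
  cube \<open>[-1, 1]\<^sup>E\<close> under an orthonormal basis \<open>E\<close>.
\<close>

lemma orthonormal_basis_finite_span:
  fixes B :: "'a::real_inner set"
  assumes "finite B"
  obtains E where "finite E" "pairwise orthogonal E" "\<And>e. e \<in> E \<Longrightarrow> norm e = 1"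
    "span E = span B"
proof -
  obtain C where C: "finite C" "span C = span B" "pairwise orthogonal C"
    using basis_orthogonal[OF assms] by blast
  define E where "E = (\<lambda>c. (1 / norm c) *\<^sub>R c) ` (C - {0})"
  show thesis
  proof
    show "finite E" using C(1) by (simp add: E_def)
    show "pairwise orthogonal E"
      using C(3) by (auto simp: E_def pairwise_def orthogonal_def)
    show "norm e = 1" if "e \<in> E" for e
      using that by (auto simp: E_def split: if_splits)
    have "span E = span (C - {0})"
      unfolding E_def using C(1) by (intro span_image_scale) auto
    then show "span E = span B" using C(2) by simp
  qed
qed

lemma compact_bounded_combinations:
  fixes E :: "'a::real_normed_vector set"
  assumes "finite E"
  shows "compact ((\<lambda>t. \<Sum>e\<in>E. t e *\<^sub>R e) ` {t. \<forall>e\<in>E. \<bar>t e\<bar> \<le> 1})"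
  using assms
proof (induction E rule: finite_induct)
  case empty
  then show ?case by simp
next
  case (insert a E)
  let ?P = "\<lambda>E. (\<lambda>t. \<Sum>e\<in>E. t e *\<^sub>R e) ` {t. \<forall>e\<in>E. \<bar>t e\<bar> \<le> 1}"
  let ?S = "(\<lambda>s. s *\<^sub>R a) ` {-1..1}"
  have "?P (insert a E) = {x + y | x y. x \<in> ?S \<and> y \<in> ?P E}"
  proof (intro set_eqI iffI)
    fix z assume "z \<in> ?P (insert a E)"
    then obtain t where t: "\<forall>e\<in>insert a E. \<bar>t e\<bar> \<le> 1"
      and z: "z = (\<Sum>e\<in>insert a E. t e *\<^sub>R e)"
      by blast
    have "z = t a *\<^sub>R a + (\<Sum>e\<in>E. t e *\<^sub>R e)"
      using z insert.hyps by simp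
    moreover have "t a *\<^sub>R a \<in> ?S"
      using t by (intro imageI) (simp add: abs_le_iff)
    moreover have "(\<Sum>e\<in>E. t e *\<^sub>R e) \<in> ?P E"
      using t by (intro rev_image_eqI[of t]) simp_all
    ultimately show "z \<in> {x + y | x y. x \<in> ?S \<and> y \<in> ?P E}"
      by blast
  next
    fix z assume "z \<in> {x + y | x y. x \<in> ?S \<and> y \<in> ?P E}"
    then obtain s t where s: "s \<in> {-1..1}" and t: "\<forall>e\<in>E. \<bar>t e\<bar> \<le> 1"
      and z: "z = s *\<^sub>R a + (\<Sum>e\<in>E. t e *\<^sub>R e)"
      by blast
    have "(\<Sum>e\<in>E. (t(a := s)) e *\<^sub>R e) = (\<Sum>e\<in>E. t e *\<^sub>R e)"
      using insert.hyps by (intro sum.cong) auto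
    then have "z = (\<Sum>e\<in>insert a E. (t(a := s)) e *\<^sub>R e)"
      using insert.hyps z by simp
    moreover have "\<forall>e\<in>insert a E. \<bar>(t(a := s)) e\<bar> \<le> 1"
      using s t by (simp add: abs_le_iff)
    ultimately show "z \<in> ?P (insert a E)" by blast
  qed
  moreover have "compact ?S"
    by (intro compact_continuous_image continuous_intros) simp
  ultimately show ?case
    using compact_sums[of ?S "?P E"] insert.IH by simp
qed

lemma compact_sphere_finite_span:
  fixes B :: "'a::real_inner set"
  assumes "finite B"
  shows "compact (span B \<inter> sphere 0 1)"
proof -
  obtain E where E: "finite E" "pairwise orthogonal E" "\<And>e. e \<in> E \<Longrightarrow> norm e = 1"
    "span E = span B"
    using orthonormal_basis_finite_span[OF assms] by blast
  define P where "P = (\<lambda>t. \<Sum>e\<in>E. t e *\<^sub>R e) ` {t. \<forall>e\<in>E. \<bar>t e\<bar> \<le> 1}"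
  have "span B \<inter> sphere 0 1 \<subseteq> P"
  proof
    fix z assume z: "z \<in> span B \<inter> sphere 0 1"
    have "\<bar>z \<bullet> e\<bar> \<le> 1" if "e \<in> E" for e
      using Cauchy_Schwarz_ineq2[of z e] E(3)[OF that] z by simp
    then have "(\<lambda>e. z \<bullet> e) \<in> {t. \<forall>e\<in>E. \<bar>t e\<bar> \<le> 1}" by blast
    moreover have "z = (\<Sum>e\<in>E. (z \<bullet> e) *\<^sub>R e)"
      using orthonormal_basis_expand[OF E(2) E(3) _ E(1), of z] z E(4) by simp
    ultimately show "z \<in> P"
      unfolding P_def using rev_image_eqI[of "\<lambda>e. z \<bullet> e" _ z "\<lambda>t. \<Sum>e\<in>E. t e *\<^sub>R e"]
      by simp
  qed
  moreover have "P \<subseteq> span B"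
    unfolding P_def E(4)[symmetric] by (auto intro!: span_sum span_scale intro: span_base)
  ultimately have eq: "span B \<inter> sphere 0 1 = P \<inter> sphere 0 1" by blast
  have "closed (sphere (0::'a) 1)"
    using closed_Diff[OF closed_cball[of 0 1] open_ball[of 0 1]] by (simp add: cball_diff_eq_sphere)
  then show ?thesis
    unfolding eq P_def by (intro compact_Int_closed compact_bounded_combinations E(1))
qed

lemma bounded_linear_bounded_below_on_finite_span:
  fixes T :: "'a::real_inner \<Rightarrow> 'b::real_normed_vector"
  assumes T: "bounded_linear T" and B: "finite B"
    and inj: "\<And>z. z \<in> span B \<Longrightarrow> T z = 0 \<Longrightarrow> z = 0"
  obtains c where "c > 0" "\<And>z. z \<in> span B \<Longrightarrow> c * norm z \<le> norm (T z)"
proof -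
  have normalized: "(1 / norm z) *\<^sub>R z \<in> span B \<inter> sphere 0 1" if "z \<in> span B" "z \<noteq> 0" for z
    using that by (simp add: span_scale)
  show thesis
  proof (cases "span B \<inter> sphere 0 1 = {}")
    case True
    have "1 * norm z \<le> norm (T z)" if "z \<in> span B" for z
      using normalized[OF that] True by (cases "z = 0") auto
    with that[of 1] show thesis by simp
  next
    case False
    have "continuous_on (span B \<inter> sphere 0 1) (\<lambda>z. norm (T z))"
      using T by (intro continuous_on_norm linear_continuous_on)
    then obtain x where x: "x \<in> span B \<inter> sphere 0 1"
      and min: "\<And>y. y \<in> span B \<inter> sphere 0 1 \<Longrightarrow> norm (T x) \<le> norm (T y)"
      using continuous_attains_inf[OF compact_sphere_finite_span[OF B] False] by blast
    have "x \<noteq> 0" using x by auto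
    then have "norm (T x) > 0" using x inj by auto
    then show thesis
    proof (rule that)
      fix z assume z: "z \<in> span B"
      show "norm (T x) * norm z \<le> norm (T z)"
      proof (cases "z = 0")
        case False
        have "norm (T x) \<le> norm (T ((1 / norm z) *\<^sub>R z))"
          using min normalized[OF z False] by blast
        also have "\<dots> = norm (T z) / norm z"
          using T by (simp add: linear_simps)
        finally show ?thesis using False by (simp add: field_simps)
      qed simp
    qed
  qed
qed

lemma bounded_linear_c0_imp_bcontfun:
  assumes "bounded_linear_c0 A"
  shows "A z \<in> bcontfun"
proof -
  obtain K where "\<And>x i. \<bar>A x i\<bar> \<le> K * norm x"
    using assms unfolding bounded_linear_c0_def by blast
  then show ?thesis by (intro bcontfun_normI[where b = "K * norm z"]) auto
qed

lemma supnorm_eq_norm_Bcontfun: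
  assumes "x \<in> bcontfun"
  shows "supnorm x = norm (Bcontfun x :: nat \<Rightarrow>\<^sub>C real)"
  unfolding norm_bcontfun_def dist_bcontfun.rep_eq zero_bcontfun.rep_eq supnorm_def
  using assms by (simp add: Bcontfun_inverse)

lemma bounded_linear_c0_imp_bounded_linear:
  assumes A: "bounded_linear_c0 A"
  shows "bounded_linear (\<lambda>z. Bcontfun (A z) :: nat \<Rightarrow>\<^sub>C real)"
proof -
  obtain K where K: "\<And>x i. \<bar>A x i\<bar> \<le> K * norm x"
    using A unfolding bounded_linear_c0_def by blast
  note app = Bcontfun_inverse[OF bounded_linear_c0_imp_bcontfun[OF A]]
  show ?thesis
  proof (rule bounded_linear_intro[where K = K])
    show "Bcontfun (A (x + y)) = Bcontfun (A x) + Bcontfun (A y)" for x y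
      using A by (intro bcontfun_eqI) (simp add: plus_bcontfun.rep_eq app bounded_linear_c0_def)
    show "Bcontfun (A (r *\<^sub>R x)) = r *\<^sub>R Bcontfun (A x)" for r x
      using A by (intro bcontfun_eqI) (simp add: scaleR_bcontfun.rep_eq app bounded_linear_c0_def)
    show "norm (Bcontfun (A x)) \<le> norm x * K" for x
      by (rule norm_bound) (simp add: app K mult.commute)
  qed
qed

lemma supnorm_lower_bound_finite_span:
  fixes A :: "'h::real_inner \<Rightarrow> nat \<Rightarrow> real"
  assumes A: "bounded_linear_c0 A" and B: "finite B" "span B = Hn"
    and null: "\<forall>z\<in>Hn. (\<forall>i. A z i = 0) \<longrightarrow> z = 0"
  obtains c where "c > 0" "\<And>z. z \<in> Hn \<Longrightarrow> c * norm z \<le> supnorm (A z)"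
proof -
  note app = Bcontfun_inverse[OF bounded_linear_c0_imp_bcontfun[OF A]]
  have "z = 0" if "z \<in> span B" "Bcontfun (A z) = 0" for z
    using null that B(2) app[of z] by (auto simp: fun_eq_iff)
  then obtain c where "c > 0" "\<And>z. z \<in> span B \<Longrightarrow> c * norm z \<le> norm (Bcontfun (A z))"
    using bounded_linear_bounded_below_on_finite_span[OF bounded_linear_c0_imp_bounded_linear[OF A] B(1)]
    by blast
  then show thesis
    using that B(2) supnorm_eq_norm_Bcontfun[OF bounded_linear_c0_imp_bcontfun[OF A]] by metis
qed

lemma norm_le_kappa:
  fixes A :: "'h::real_inner \<Rightarrow> nat \<Rightarrow> real"
  assumes A: "bounded_linear_c0 A" and B: "finite B" "span B = Hn"
    and null: "\<forall>z\<in>Hn. (\<forall>i. A z i = 0) \<longrightarrow> z = 0"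
    and z: "z \<in> Hn" "\<forall>i. \<bar>A z i\<bar> \<le> 1"
  shows "norm z \<le> kappa A Hn"
proof -
  obtain c where c: "c > 0" "\<And>z. z \<in> Hn \<Longrightarrow> c * norm z \<le> supnorm (A z)"
    using supnorm_lower_bound_finite_span[OF A B null] by blast
  let ?Q = "insert 0 ((\<lambda>z. norm z / supnorm (A z)) ` (Hn - {0}))"
  have "norm y / supnorm (A y) \<le> 1 / c" if "y \<in> Hn" "y \<noteq> 0" for y
  proof -
    have "0 < c * norm y" using c(1) that(2) by simp
    also have "\<dots> \<le> supnorm (A y)" using c(2) that(1) .
    finally show ?thesis using c(1) c(2)[OF that(1)] by (simp add: field_simps)
  qed
  then have bdd: "bdd_above ?Q"
    unfolding bdd_above_insert by (intro bdd_aboveI2[where M = "1 / c"]) auto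
  have kappa_nonneg: "0 \<le> kappa A Hn"
    unfolding kappa_def using bdd by (intro cSup_upper) auto
  show ?thesis
  proof (cases "z = 0")
    case False
    have "0 < c * norm z" using c(1) False by simp
    also have "\<dots> \<le> supnorm (A z)" using c(2) z(1) .
    finally have pos: "0 < supnorm (A z)" .
    have le1: "supnorm (A z) \<le> 1"
      unfolding supnorm_def using z(2) by (intro cSUP_least) auto
    have "norm z / supnorm (A z) \<le> kappa A Hn"
      unfolding kappa_def using bdd z(1) False by (intro cSup_upper) auto
    then have "norm z \<le> kappa A Hn * supnorm (A z)"
      using pos by (simp add: divide_le_eq)
    also have "\<dots> \<le> kappa A Hn"
      using kappa_nonneg le1 by (simp add: mult_left_le)
    finally show ?thesis .
  qed (simp add: kappa_nonneg)
qed

lemma summable_bounded_times_l1: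
  assumes u: "in_l1 u" and x: "\<And>i. \<bar>x i\<bar> \<le> M"
  shows "summable (\<lambda>i. x i * u i)"
proof (rule summable_comparison_test)
  show "summable (\<lambda>i. M * \<bar>u i\<bar>)"
    using u unfolding in_l1_def by (rule summable_mult)
  show "\<exists>N. \<forall>i\<ge>N. norm (x i * u i) \<le> M * \<bar>u i\<bar>"
    using x by (intro exI[of _ 0] allI impI) (simp add: abs_mult mult_right_mono)
qed

lemma pairing_le_l1norm:
  assumes u: "in_l1 u" and x: "\<And>i. \<bar>x i\<bar> \<le> 1"
  shows "pairing x u \<le> l1norm u"
  unfolding pairing_def l1norm_def
proof (rule suminf_le)
  show "x i * u i \<le> \<bar>u i\<bar>" for i
    using abs_ge_self[of "x i * u i"] mult_right_mono[OF x[of i] abs_ge_zero[of "u i"]]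
    by (simp add: abs_mult)
  show "summable (\<lambda>i. x i * u i)"
    using summable_bounded_times_l1[OF u x] .
  show "summable (\<lambda>i. \<bar>u i\<bar>)"
    using u unfolding in_l1_def .
qed

lemma Dsym_expand:
  assumes u: "in_l1 u1" "in_l1 u2" and x: "\<And>i. \<bar>x1 i\<bar> \<le> 1" "\<And>i. \<bar>x2 i\<bar> \<le> 1"
  shows "Dsym x1 x2 u1 u2
    = (pairing x1 u1 - pairing x1 u2) - (pairing x2 u1 - pairing x2 u2)"
proof -
  have "Dsym x1 x2 u1 u2
      = (\<Sum>i. (x1 i * u1 i - x1 i * u2 i) - (x2 i * u1 i - x2 i * u2 i))"
    unfolding Dsym_def pairing_def by (simp add: algebra_simps)
  then show ?thesis
    unfolding pairing_def
    using summable_bounded_times_l1[OF u(1) x(1)] summable_bounded_times_l1[OF u(2) x(1)]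
      summable_bounded_times_l1[OF u(1) x(2)] summable_bounded_times_l1[OF u(2) x(2)]
    by (simp add: suminf_diff summable_diff)
qed

lemma feasible_pairing:
  assumes "feasible A Hn f u" "z \<in> Hn"
  shows "pairing (A z) u = inner z f"
  using assms unfolding feasible_def pairing_def by (simp add: mult.commute)

lemma subgradient_pairing:
  assumes "feasible A Hn f u" "v \<in> Hn" "A v \<in> subdiff_l1 u"
  shows "l1norm u = inner v f"
  using assms feasible_pairing unfolding subdiff_l1_def by fastforce

lemma Dsym_eq_inner:
  assumes u1: "feasible A Hn f1 u1" and u2: "feasible A Hn f2 u2"
    and v1: "v1 \<in> Hn" "A v1 \<in> subdiff_l1 u1"
    and v2: "v2 \<in> Hn" "A v2 \<in> subdiff_l1 u2"
  shows "Dsym (A v1) (A v2) u1 u2 = inner (v1 - v2) (f1 - f2)"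
proof -
  have "in_l1 u1" "in_l1 u2"
    using u1 u2 by (simp_all add: feasible_def)
  moreover have "\<And>i. \<bar>A v1 i\<bar> \<le> 1" "\<And>i. \<bar>A v2 i\<bar> \<le> 1"
    using v1(2) v2(2) by (simp_all add: subdiff_l1_def)
  ultimately have "Dsym (A v1) (A v2) u1 u2
      = (inner v1 f1 - inner v1 f2) - (inner v2 f1 - inner v2 f2)"
    by (simp add: Dsym_expand feasible_pairing[OF u1] feasible_pairing[OF u2] v1(1) v2(1))
  then show ?thesis by (simp add: inner_diff_left inner_diff_right)
qed

lemma l1norm_diff_le:
  assumes u1: "feasible A Hn f1 u1" and u2: "feasible A Hn f2 u2"
    and v1: "v1 \<in> Hn" "A v1 \<in> subdiff_l1 u1"
  shows "l1norm u1 - l1norm u2 \<le> norm v1 * norm (f1 - f2)"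
proof -
  have "inner v1 f2 \<le> l1norm u2"
    using pairing_le_l1norm[of u2 "A v1"] feasible_pairing[OF u2 v1(1)] u2 v1(2)
    by (simp add: feasible_def subdiff_l1_def)
  then have "l1norm u1 - l1norm u2 \<le> inner v1 (f1 - f2)"
    using subgradient_pairing[OF u1 v1] by (simp add: inner_diff_right)
  also have "\<dots> \<le> norm v1 * norm (f1 - f2)"
    by (rule norm_cauchy_schwarz)
  finally show ?thesis .
qed

theorem proposition3:
  fixes A :: "'h::{real_inner, complete_space} \<Rightarrow> nat \<Rightarrow> real"
    and Hn :: "'h set" and n :: nat
    and f1 f2 :: 'h and u1 u2 :: "nat \<Rightarrow> real" and v1 v2 :: 'h
  assumes A: "bounded_linear_c0 A"
    and Hn_sub: "subspace Hn" and Hn_fin: "\<exists>B. finite B \<and> span B = Hn" and Hn_dim: "dim Hn = n"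
    and null: "\<forall>z\<in>Hn. (\<forall>i. A z i = 0) \<longrightarrow> z = 0"
    and u1: "is_l1_min_solution A Hn f1 u1"
    and u2: "is_l1_min_solution A Hn f2 u2"
    and v1: "v1 \<in> Hn" "A v1 \<in> subdiff_l1 u1"
    and v2: "v2 \<in> Hn" "A v2 \<in> subdiff_l1 u2"
  shows "Dsym (A v1) (A v2) u1 u2 \<le> 2 * kappa A Hn * norm (f1 - f2) \<and>
         \<bar>l1norm u1 - l1norm u2\<bar> \<le> 2 * kappa A Hn * norm (f1 - f2)"
proof -
  obtain B where B: "finite B" "span B = Hn" using Hn_fin by blast
  have feas: "feasible A Hn f1 u1" "feasible A Hn f2 u2"
    using u1 u2 unfolding is_l1_min_solution_def by blast+
  have nv1: "norm v1 \<le> kappa A Hn" and nv2: "norm v2 \<le> kappa A Hn"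
    using norm_le_kappa[OF A B null] v1 v2 by (auto simp: subdiff_l1_def)
  have "Dsym (A v1) (A v2) u1 u2 = inner (v1 - v2) (f1 - f2)"
    using Dsym_eq_inner[OF feas v1 v2] .
  also have "\<dots> \<le> norm (v1 - v2) * norm (f1 - f2)"
    by (rule norm_cauchy_schwarz)
  also have "\<dots> \<le> 2 * kappa A Hn * norm (f1 - f2)"
    using norm_triangle_ineq4[of v1 v2] nv1 nv2 by (intro mult_right_mono) auto
  finally have "Dsym (A v1) (A v2) u1 u2 \<le> 2 * kappa A Hn * norm (f1 - f2)" .
  moreover have "l1norm u1 - l1norm u2 \<le> kappa A Hn * norm (f1 - f2)"
    using l1norm_diff_le[OF feas v1] nv1 by (meson mult_right_mono norm_ge_zero order_trans)
  moreover have "l1norm u2 - l1norm u1 \<le> kappa A Hn * norm (f1 - f2)"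
    using l1norm_diff_le[OF feas(2,1) v2] nv2 norm_minus_commute[of f1 f2]
    by (metis mult_right_mono norm_ge_zero order_trans)
  moreover have "0 \<le> kappa A Hn * norm (f1 - f2)"
    by (rule mult_nonneg_nonneg[OF order_trans[OF norm_ge_zero nv1] norm_ge_zero])
  ultimately show ?thesis
    by (simp only: mult.assoc) (auto simp: abs_le_iff)
qed

end
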